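(* Let $\Gamma$ be a finite group and let $f:Y\to X$ be a $\Gamma$-covering of finite graphs. Then there exist a map $\alpha:\mathbb{E}_X\to\Gamma$ with $\alpha(\bar e)=\alpha(e)^{-1}$ for all $e\in\mathbb{E}_X$, and a family $\mathcal{I}=(I_v)_{v\in V_X}$ of subgroups of $\Gamma$, such that $Y$ is isomorphic to the derived graph $X(\Gamma,\mathcal{I})$ as $\Gamma$-coverings of $X$. That is, there is a $\Gamma$-equivariant isomorphism of graphs $Y\cong X(\Gamma,\mathcal{I})$ compatible with the maps to $X$.
   Context: A finite graph $X$ consists of a finite vertex set $V_X$, a finite edge set $\mathbb{E}_X$, a fixed-point-free involution $e\mapsto\bar e$ on $\mathbb{E}_X$, and maps $s,t:\mathbb{E}_X\to V_X$ with $s(\bar e)=t(e)$ and $t(\bar e)=s(e)$; multi-edges and loops are allowed. A morphism $f:Y\to X$ is a pair $f_V:V_Y\to V_X$, $f_{\mathbb{E}}:\mathbb{E}_Y\to\mathbb{E}_X$ with $f_V(s(e))=s(f_{\mathbb{E}}(e))$, $f_V(t(e))=t(f_{\mathbb{E}}(e))$ and $f_{\mathbb{E}}(\bar e)=\overline{f_{\mathbb{E}}(e)}$. A $\Gamma$-covering is a morphism $f:Y\to X$ with an action of $\Gamma$ on $Y$ (by graph automorphisms) preserving $f$, such that $\Gamma$ acts transitively on each vertex fibre $f_V^{-1}(v)$ and freely and transitively on each edge fibre $f_{\mathbb{E}}^{-1}(e)$. Given $(X,\Gamma,\alpha,\mathcal{I})$ as in the claim with $\Gamma$ finite, the derived graph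 $X(\Gamma,\mathcal{I})$ is defined as follows. Its vertex set is $\coprod_{v\in V_X}(\Gamma/I_v\times\{v\})$ and its edge set is $\Gamma\times\mathbb{E}_X$. For an edge $(\gamma,e)$ we set $s((\gamma,e))=(\gamma I_{s(e)},s(e))$, $t((\gamma,e))=(\gamma\alpha(e)I_{t(e)},t(e))$ and $\overline{(\gamma,e)}=(\gamma\alpha(e),\bar e)$. The group $\Gamma$ acts by left multiplication on first components, and projection to second components gives a $\Gamma$-covering $X(\Gamma,\mathcal{I})\to X$. *)

theory Defs
  imports "HOL-Algebra.Algebra"
begin

text \<open>Finite graphs in Serre's sense: vertex set, edge set, fixed-point-free
involution on gedges (reversal), source and target maps.\<close>

record ('v, 'e) graph =
  gverts :: "'v set"
  gedges :: "'e set"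
  grev   :: "'e \<Rightarrow> 'e"
  gsrc   :: "'e \<Rightarrow> 'v"
  gtgt   :: "'e \<Rightarrow> 'v"

definition is_graph :: "('v, 'e) graph \<Rightarrow> bool" where
  "is_graph B \<longleftrightarrow>
     (\<forall>e\<in>gedges B. grev B e \<in> gedges B \<and> grev B e \<noteq> e \<and> grev B (grev B e) = e
        \<and> gsrc B e \<in> gverts B \<and> gtgt B e \<in> gverts B
        \<and> gsrc B (grev B e) = gtgt B e \<and> gtgt B (grev B e) = gsrc B e)"

definition finite_graph :: "('v, 'e) graph \<Rightarrow> bool" where
  "finite_graph B \<longleftrightarrow> is_graph B \<and> finite (gverts B) \<and> finite (gedges B)"

definition graph_hom ::
  "('v, 'e) graph \<Rightarrow> ('w, 'd) graph \<Rightarrow> ('v \<Rightarrow> 'w) \<Rightarrow> ('e \<Rightarrow> 'd) \<Rightarrow> bool" where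
  "graph_hom Y B fV fE \<longleftrightarrow>
     (\<forall>v\<in>gverts Y. fV v \<in> gverts B) \<and> (\<forall>e\<in>gedges Y. fE e \<in> gedges B) \<and>
     (\<forall>e\<in>gedges Y. fV (gsrc Y e) = gsrc B (fE e) \<and> fV (gtgt Y e) = gtgt B (fE e)
                   \<and> fE (grev Y e) = grev B (fE e))"

definition graph_iso ::
  "('v, 'e) graph \<Rightarrow> ('w, 'd) graph \<Rightarrow> ('v \<Rightarrow> 'w) \<Rightarrow> ('e \<Rightarrow> 'd) \<Rightarrow> bool" where
  "graph_iso Y B fV fE \<longleftrightarrow> graph_hom Y B fV fE \<and>
     bij_betw fV (gverts Y) (gverts B) \<and> bij_betw fE (gedges Y) (gedges B)"

definition graph_action ::
  "('g, 'm) monoid_scheme \<Rightarrow> ('v, 'e) graph \<Rightarrow> ('g \<Rightarrow> 'v \<Rightarrow> 'v) \<Rightarrow> ('g \<Rightarrow> 'e \<Rightarrow> 'e) \<Rightarrow> bool" where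
  "graph_action G Y aV aE \<longleftrightarrow>
     (\<forall>g\<in>carrier G. graph_iso Y Y (aV g) (aE g)) \<and>
     (\<forall>v\<in>gverts Y. aV \<one>\<^bsub>G\<^esub> v = v) \<and> (\<forall>e\<in>gedges Y. aE \<one>\<^bsub>G\<^esub> e = e) \<and>
     (\<forall>g\<in>carrier G. \<forall>h\<in>carrier G.
        (\<forall>v\<in>gverts Y. aV (g \<otimes>\<^bsub>G\<^esub> h) v = aV g (aV h v)) \<and>
        (\<forall>e\<in>gedges Y. aE (g \<otimes>\<^bsub>G\<^esub> h) e = aE g (aE h e)))"

text \<open>A G-covering f : Y \<rightarrow> B (transitive actions are taken on nonempty sets,
so fibres over vertices are nonempty).\<close>
definition covering ::
  "('g, 'm) monoid_scheme \<Rightarrow> ('v, 'e) graph \<Rightarrow> ('w, 'd) graph \<Rightarrow>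
   ('g \<Rightarrow> 'v \<Rightarrow> 'v) \<Rightarrow> ('g \<Rightarrow> 'e \<Rightarrow> 'e) \<Rightarrow> ('v \<Rightarrow> 'w) \<Rightarrow> ('e \<Rightarrow> 'd) \<Rightarrow> bool" where
  "covering G Y B aV aE fV fE \<longleftrightarrow>
     graph_hom Y B fV fE \<and> graph_action G Y aV aE \<and>
     (\<forall>g\<in>carrier G. (\<forall>v\<in>gverts Y. fV (aV g v) = fV v) \<and> (\<forall>e\<in>gedges Y. fE (aE g e) = fE e)) \<and>
     (\<forall>x\<in>gverts B. (\<exists>v\<in>gverts Y. fV v = x) \<and>
        (\<forall>v\<in>gverts Y. \<forall>w\<in>gverts Y. fV v = x \<longrightarrow> fV w = x \<longrightarrow> (\<exists>g\<in>carrier G. aV g v = w))) \<and>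
     (\<forall>x\<in>gedges B. (\<exists>e\<in>gedges Y. fE e = x) \<and>
        (\<forall>e\<in>gedges Y. \<forall>d\<in>gedges Y. fE e = x \<longrightarrow> fE d = x \<longrightarrow> (\<exists>!g. g \<in> carrier G \<and> aE g e = d)))"

definition derived_graph ::
  "('g, 'm) monoid_scheme \<Rightarrow> ('w, 'd) graph \<Rightarrow> ('d \<Rightarrow> 'g) \<Rightarrow> ('w \<Rightarrow> 'g set) \<Rightarrow>
   ('g set \<times> 'w, 'g \<times> 'd) graph" where
  "derived_graph G B \<alpha> I =
     \<lparr> gverts = {(g <#\<^bsub>G\<^esub> I v, v) | g v. g \<in> carrier G \<and> v \<in> gverts B},
       gedges = carrier G \<times> gedges B,
       grev = (\<lambda>(g, e). (g \<otimes>\<^bsub>G\<^esub> \<alpha> e, grev B e)),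
       gsrc = (\<lambda>(g, e). (g <#\<^bsub>G\<^esub> I (gsrc B e), gsrc B e)),
       gtgt = (\<lambda>(g, e). ((g \<otimes>\<^bsub>G\<^esub> \<alpha> e) <#\<^bsub>G\<^esub> I (gtgt B e), gtgt B e)) \<rparr>"

definition derived_actV :: "('g, 'm) monoid_scheme \<Rightarrow> 'g \<Rightarrow> 'g set \<times> 'w \<Rightarrow> 'g set \<times> 'w" where
  "derived_actV G h = (\<lambda>(C, v). (h <#\<^bsub>G\<^esub> C, v))"

definition derived_actE :: "('g, 'm) monoid_scheme \<Rightarrow> 'g \<Rightarrow> 'g \<times> 'd \<Rightarrow> 'g \<times> 'd" where
  "derived_actE G h = (\<lambda>(g, e). (h \<otimes>\<^bsub>G\<^esub> g, e))"

end

theory Submission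
  imports Defs
begin

text \<open>Choose a lift \<open>x'\<close> of every vertex \<open>x\<close> of the base, and a lift \<open>e'\<close> of every
  edge \<open>e\<close> that starts at the chosen lift of its source. Since \<open>\<Gamma>\<close> acts simply
  transitively on edge fibres, there is a unique \<open>\<alpha>(e)\<close> carrying the chosen lift of the
  reverse edge \<open>rev e\<close> to the reverse of \<open>e'\<close>; reversing this relation gives
  \<open>\<alpha>(rev e) = \<alpha>(e)\<^sup>-\<^sup>1\<close>, so no orientation of the base has to be fixed, and comparing
  sources in it shows that \<open>e'\<close> ends at \<open>\<alpha>(e) x'\<close> for \<open>x\<close> the target of \<open>e\<close>. With \<open>I\<^sub>x\<close> the stabiliser of \<open>x'\<close>,
  send the vertex \<open>g x'\<close> to \<open>(g I\<^sub>x, x)\<close> and the edge \<open>g e'\<close> to \<open>(g, e)\<close>. Transitivity on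
  the fibres makes these maps well defined and bijective, and they are equivariant by
  construction.\<close>

locale graph_covering = group G for G :: "('g, 'm) monoid_scheme" (structure) +
  fixes Y :: "('v, 'e) graph" and B :: "('w, 'd) graph"
    and aV :: "'g \<Rightarrow> 'v \<Rightarrow> 'v" and aE :: "'g \<Rightarrow> 'e \<Rightarrow> 'e"
    and fV :: "'v \<Rightarrow> 'w" and fE :: "'e \<Rightarrow> 'd"
  assumes graph_Y: "is_graph Y"
    and covering: "covering G Y B aV aE fV fE"
begin

lemma
  assumes "e \<in> gedges Y"
  shows gsrc_closed: "gsrc Y e \<in> gverts Y"
    and gtgt_closed: "gtgt Y e \<in> gverts Y"
    and grev_closed: "grev Y e \<in> gedges Y"
    and grev_grev: "grev Y (grev Y e) = e"
    and gsrc_grev: "gsrc Y (grev Y e) = gtgt Y e"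
  using graph_Y assms unfolding is_graph_def by blast+

lemma
  shows projection_hom: "graph_hom Y B fV fE"
    and action: "graph_action G Y aV aE"
    and projection_invariant: "\<forall>g\<in>carrier G. (\<forall>v\<in>gverts Y. fV (aV g v) = fV v) \<and>
                                             (\<forall>e\<in>gedges Y. fE (aE g e) = fE e)"
    and vertex_fibres: "\<forall>x\<in>gverts B. (\<exists>v\<in>gverts Y. fV v = x) \<and>
          (\<forall>v\<in>gverts Y. \<forall>w\<in>gverts Y. fV v = x \<longrightarrow> fV w = x \<longrightarrow> (\<exists>g\<in>carrier G. aV g v = w))"
    and edge_fibres: "\<forall>x\<in>gedges B. (\<exists>e\<in>gedges Y. fE e = x) \<and>
          (\<forall>e\<in>gedges Y. \<forall>d\<in>gedges Y. fE e = x \<longrightarrow> fE d = x \<longrightarrow> (\<exists>!g. g \<in> carrier G \<and> aE g e = d))"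
  using covering unfolding covering_def by simp_all

lemma fV_closed: "v \<in> gverts Y \<Longrightarrow> fV v \<in> gverts B"
  using projection_hom unfolding graph_hom_def by blast

lemma
  assumes "e \<in> gedges Y"
  shows fE_closed: "fE e \<in> gedges B"
    and fV_gsrc: "fV (gsrc Y e) = gsrc B (fE e)"
    and fV_gtgt: "fV (gtgt Y e) = gtgt B (fE e)"
    and fE_grev: "fE (grev Y e) = grev B (fE e)"
  using projection_hom assms unfolding graph_hom_def by blast+

lemma action_hom: "g \<in> carrier G \<Longrightarrow> graph_hom Y Y (aV g) (aE g)"
  using action unfolding graph_action_def graph_iso_def by blast

lemma
  assumes "g \<in> carrier G" and "e \<in> gedges Y"
  shows aE_closed: "aE g e \<in> gedges Y"
    and gsrc_aE: "gsrc Y (aE g e) = aV g (gsrc Y e)"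
    and gtgt_aE: "gtgt Y (aE g e) = aV g (gtgt Y e)"
    and grev_aE: "grev Y (aE g e) = aE g (grev Y e)"
  using action_hom[OF assms(1)] assms(2) unfolding graph_hom_def by auto

lemma
  assumes "g \<in> carrier G" and "v \<in> gverts Y"
  shows aV_closed: "aV g v \<in> gverts Y"
  using action_hom[OF assms(1)] assms(2) unfolding graph_hom_def by blast

lemma
  assumes "g \<in> carrier G"
  shows fV_aV: "v \<in> gverts Y \<Longrightarrow> fV (aV g v) = fV v"
    and fE_aE: "e \<in> gedges Y \<Longrightarrow> fE (aE g e) = fE e"
  using projection_invariant assms by blast+

lemma aV_one: "v \<in> gverts Y \<Longrightarrow> aV \<one> v = v"
  and aE_one: "e \<in> gedges Y \<Longrightarrow> aE \<one> e = e"
  using action unfolding graph_action_def by blast+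

lemma
  assumes "g \<in> carrier G" and "h \<in> carrier G"
  shows aV_mult: "v \<in> gverts Y \<Longrightarrow> aV (g \<otimes> h) v = aV g (aV h v)"
    and aE_mult: "e \<in> gedges Y \<Longrightarrow> aE (g \<otimes> h) e = aE g (aE h e)"
  using action assms unfolding graph_action_def by blast+

lemma aV_inv: "g \<in> carrier G \<Longrightarrow> v \<in> gverts Y \<Longrightarrow> aV (inv g) (aV g v) = v"
  by (metis aV_mult aV_one inv_closed l_inv)

lemma aE_inv: "g \<in> carrier G \<Longrightarrow> e \<in> gedges Y \<Longrightarrow> aE (inv g) (aE g e) = e"
  by (metis aE_mult aE_one inv_closed l_inv)

lemma vertex_fibre_nonempty: "x \<in> gverts B \<Longrightarrow> \<exists>v\<in>gverts Y. fV v = x"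
  using vertex_fibres by blast

lemma edge_fibre_nonempty: "e \<in> gedges B \<Longrightarrow> \<exists>y\<in>gedges Y. fE y = e"
  using edge_fibres by blast

lemma vertex_fibre_transitive:
  assumes "v \<in> gverts Y" and "w \<in> gverts Y" and "fV v = fV w"
  shows "\<exists>g\<in>carrier G. aV g v = w"
  using vertex_fibres fV_closed assms by blast

lemma edge_fibre_regular:
  assumes "d \<in> gedges Y" and "e \<in> gedges Y" and "fE d = fE e"
  shows "\<exists>!g. g \<in> carrier G \<and> aE g d = e"
  using edge_fibres fE_closed assms by blast

lemma
  assumes "e \<in> gedges B"
  shows base_grev_closed: "grev B e \<in> gedges B"
    and base_grev_grev: "grev B (grev B e) = e"
    and base_gsrc_closed: "gsrc B e \<in> gverts B"
    and base_gtgt_closed: "gtgt B e \<in> gverts B"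
    and base_gsrc_grev: "gsrc B (grev B e) = gtgt B e"
proof -
  obtain y where y: "y \<in> gedges Y" "fE y = e" using edge_fibre_nonempty assms by blast
  have rev: "grev Y y \<in> gedges Y" "fE (grev Y y) = grev B e"
    using y grev_closed fE_grev by auto
  show "grev B e \<in> gedges B" using rev fE_closed by metis
  show "grev B (grev B e) = e" using rev y fE_grev grev_grev by metis
  show "gsrc B e \<in> gverts B" using y fV_gsrc fV_closed gsrc_closed by metis
  show "gtgt B e \<in> gverts B" using y fV_gtgt fV_closed gtgt_closed by metis
  show "gsrc B (grev B e) = gtgt B e" using rev y fV_gsrc fV_gtgt gsrc_grev by metis
qed

lemma subgroup_stabilizer: "v \<in> gverts Y \<Longrightarrow> subgroup (stabilizer G aV v) G"
  by (rule subgroupI) (auto simp: stabilizer_def aV_one aV_mult, metis aV_inv)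

definition base_lift :: "'w \<Rightarrow> 'v" where
  "base_lift x = (SOME v. v \<in> gverts Y \<and> fV v = x)"

abbreviation base_stabilizer :: "'w \<Rightarrow> 'g set" where
  "base_stabilizer x \<equiv> stabilizer G aV (base_lift x)"

lemma base_lift: "x \<in> gverts B \<Longrightarrow> base_lift x \<in> gverts Y \<and> fV (base_lift x) = x"
  unfolding base_lift_def by (rule someI_ex) (use vertex_fibre_nonempty in blast)

lemma translate_base_lift:
  assumes "v \<in> gverts Y"
  obtains g where "g \<in> carrier G" and "aV g (base_lift (fV v)) = v"
  using vertex_fibre_transitive base_lift fV_closed assms by metis

definition vertex_coset :: "'v \<Rightarrow> 'g set" where
  "vertex_coset v = {g \<in> carrier G. aV g (base_lift (fV v)) = v}"

lemma aV_eq_iff_stabilizer: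
  assumes g: "g \<in> carrier G" and h: "h \<in> carrier G" and v: "v \<in> gverts Y"
  shows "aV h v = aV g v \<longleftrightarrow> inv g \<otimes> h \<in> stabilizer G aV v"
proof -
  have "aV (inv g \<otimes> h) v = aV (inv g) (aV h v)" using aV_mult g h v by simp
  moreover have "aV (inv g) (aV h v) = v \<longleftrightarrow> aV h v = aV g v"
    using aV_inv[of "inv g" "aV h v"] aV_inv[OF g v] g h v aV_closed by auto
  ultimately show ?thesis using g h by (simp add: stabilizer_def)
qed

lemma vertex_coset_translate:
  assumes x: "x \<in> gverts B" and g: "g \<in> carrier G"
  shows "vertex_coset (aV g (base_lift x)) = g <#\<^bsub>G\<^esub> base_stabilizer x"
proof (rule Set.set_eqI)
  fix h
  have lift: "base_lift x \<in> gverts Y" "fV (base_lift x) = x" using base_lift x by auto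
  interpret stab: subgroup "base_stabilizer x" G using subgroup_stabilizer lift by blast
  have "h \<in> vertex_coset (aV g (base_lift x)) \<longleftrightarrow>
        h \<in> carrier G \<and> aV h (base_lift x) = aV g (base_lift x)"
    using fV_aV g lift by (auto simp: vertex_coset_def)
  also have "\<dots> \<longleftrightarrow> h \<in> carrier G \<and> inv g \<otimes> h \<in> base_stabilizer x"
    using aV_eq_iff_stabilizer g lift by blast
  also have "\<dots> \<longleftrightarrow> h \<in> g <#\<^bsub>G\<^esub> base_stabilizer x"
    using stab.lcos_module_imp stab.lcos_module_rev stab.elemlcos_carrier is_group g by blast
  finally show "h \<in> vertex_coset (aV g (base_lift x)) \<longleftrightarrow> h \<in> g <#\<^bsub>G\<^esub> base_stabilizer x" .
qed

definition edge_lift :: "'d \<Rightarrow> 'e" where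
  "edge_lift e = (SOME y. y \<in> gedges Y \<and> fE y = e \<and> gsrc Y y = base_lift (gsrc B e))"

lemma edge_lift:
  assumes e: "e \<in> gedges B"
  shows "edge_lift e \<in> gedges Y \<and> fE (edge_lift e) = e \<and> gsrc Y (edge_lift e) = base_lift (gsrc B e)"
proof -
  obtain y where y: "y \<in> gedges Y" "fE y = e" using edge_fibre_nonempty e by blast
  obtain g where g: "g \<in> carrier G" "aV g (gsrc Y y) = base_lift (gsrc B e)"
    using vertex_fibre_transitive[of "gsrc Y y" "base_lift (gsrc B e)"]
      base_lift base_gsrc_closed[OF e] y gsrc_closed fV_gsrc by metis
  have "aE g y \<in> gedges Y \<and> fE (aE g y) = e \<and> gsrc Y (aE g y) = base_lift (gsrc B e)"
    using g y aE_closed fE_aE gsrc_aE by simp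
  then show ?thesis unfolding edge_lift_def by (rule someI)
qed

definition edge_shift :: "'e \<Rightarrow> 'e \<Rightarrow> 'g" where
  "edge_shift d e = (THE g. g \<in> carrier G \<and> aE g d = e)"

lemma edge_shift:
  assumes "d \<in> gedges Y" and "e \<in> gedges Y" and "fE d = fE e"
  shows "edge_shift d e \<in> carrier G \<and> aE (edge_shift d e) d = e"
  unfolding edge_shift_def by (rule theI') (rule edge_fibre_regular[OF assms])

lemma edge_shift_eq:
  assumes "d \<in> gedges Y" and "g \<in> carrier G" and "aE g d = e"
  shows "edge_shift d e = g"
  unfolding edge_shift_def
  using edge_fibre_regular[of d e] assms aE_closed fE_aE by (intro the1_equality) auto

definition voltage :: "'d \<Rightarrow> 'g" where
  "voltage e = edge_shift (edge_lift (grev B e)) (grev Y (edge_lift e))"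

lemma voltage:
  assumes e: "e \<in> gedges B"
  shows "voltage e \<in> carrier G \<and> aE (voltage e) (edge_lift (grev B e)) = grev Y (edge_lift e)"
  unfolding voltage_def
  using edge_shift edge_lift base_grev_closed[OF e] e grev_closed fE_grev by metis

lemma voltage_grev:
  assumes e: "e \<in> gedges B"
  shows "voltage (grev B e) = inv (voltage e)"
proof -
  let ?a = "voltage e"
  have a: "?a \<in> carrier G" and shift: "aE ?a (edge_lift (grev B e)) = grev Y (edge_lift e)"
    using voltage e by auto
  have lifts: "edge_lift e \<in> gedges Y" "edge_lift (grev B e) \<in> gedges Y"
    using edge_lift base_grev_closed e by auto
  have "aE ?a (grev Y (edge_lift (grev B e))) = grev Y (aE ?a (edge_lift (grev B e)))"
    using grev_aE[OF a lifts(2)] by simp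
  also have "\<dots> = edge_lift e" using shift grev_grev lifts(1) by simp
  finally have "aE (inv ?a) (edge_lift e) = grev Y (edge_lift (grev B e))"
    using aE_inv[OF a grev_closed[OF lifts(2)]] by simp
  then have "edge_shift (edge_lift e) (grev Y (edge_lift (grev B e))) = inv ?a"
    using edge_shift_eq lifts(1) a by blast
  then show ?thesis
    unfolding voltage_def[of "grev B e"] base_grev_grev[OF e] .
qed

lemma gtgt_edge_lift:
  assumes e: "e \<in> gedges B"
  shows "gtgt Y (edge_lift e) = aV (voltage e) (base_lift (gtgt B e))"
proof -
  have "gtgt Y (edge_lift e) = gsrc Y (grev Y (edge_lift e))"
    using gsrc_grev edge_lift e by metis
  also have "\<dots> = gsrc Y (aE (voltage e) (edge_lift (grev B e)))"
    using voltage e by metis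
  also have "\<dots> = aV (voltage e) (base_lift (gtgt B e))"
    using gsrc_aE voltage edge_lift base_grev_closed base_gsrc_grev e by metis
  finally show ?thesis .
qed

lemma translate_edge_lift:
  assumes "y \<in> gedges Y"
  obtains g where "g \<in> carrier G" and "aE g (edge_lift (fE y)) = y"
  using edge_shift edge_lift fE_closed assms by metis

definition derived_vertex :: "'v \<Rightarrow> 'g set \<times> 'w" where
  "derived_vertex v = (vertex_coset v, fV v)"

definition derived_edge :: "'e \<Rightarrow> 'g \<times> 'd" where
  "derived_edge y = (edge_shift (edge_lift (fE y)) y, fE y)"

abbreviation derived :: "('g set \<times> 'w, 'g \<times> 'd) graph" where
  "derived \<equiv> derived_graph G B voltage base_stabilizer"

lemma derived_vertex_translate:
  assumes "x \<in> gverts B" and "g \<in> carrier G"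
  shows "derived_vertex (aV g (base_lift x)) = (g <#\<^bsub>G\<^esub> base_stabilizer x, x)"
  unfolding derived_vertex_def
  using vertex_coset_translate fV_aV base_lift assms by simp

lemma derived_edge_translate:
  assumes "e \<in> gedges B" and "g \<in> carrier G"
  shows "derived_edge (aE g (edge_lift e)) = (g, e)"
  unfolding derived_edge_def
  using edge_shift_eq fE_aE edge_lift assms by simp

lemma derived_hom: "graph_hom Y derived derived_vertex derived_edge"
  unfolding graph_hom_def
proof (intro conjI ballI)
  fix v assume "v \<in> gverts Y"
  then obtain g where "g \<in> carrier G" "aV g (base_lift (fV v)) = v"
    by (rule translate_base_lift)
  then show "derived_vertex v \<in> gverts derived"
    using derived_vertex_translate fV_closed \<open>v \<in> gverts Y\<close>
    by (force simp: derived_graph_def)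
next
  fix y assume y: "y \<in> gedges Y"
  then obtain g where g: "g \<in> carrier G" and y_lift: "aE g (edge_lift (fE y)) = y"
    by (rule translate_edge_lift)
  define e where "e = fE y"
  have e: "e \<in> gedges B" using fE_closed y e_def by simp
  have lift: "edge_lift e \<in> gedges Y" "gsrc Y (edge_lift e) = base_lift (gsrc B e)"
    using edge_lift e by auto
  have a: "voltage e \<in> carrier G" using voltage e by blast
  have y_eq: "y = aE g (edge_lift e)" using y_lift e_def by simp
  show "derived_edge y \<in> gedges derived"
    using derived_edge_translate e g by (simp add: y_eq derived_graph_def)
  have "gsrc Y y = aV g (base_lift (gsrc B e))"
    using gsrc_aE g lift by (simp add: y_eq)
  then show "derived_vertex (gsrc Y y) = gsrc derived (derived_edge y)"
    using derived_vertex_translate derived_edge_translate base_gsrc_closed e g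
    by (simp add: y_eq derived_graph_def)
  have "gtgt Y y = aV (g \<otimes> voltage e) (base_lift (gtgt B e))"
    using gtgt_aE gtgt_edge_lift aV_mult base_lift base_gtgt_closed g lift a e
    by (simp add: y_eq)
  then show "derived_vertex (gtgt Y y) = gtgt derived (derived_edge y)"
    using derived_vertex_translate derived_edge_translate base_gtgt_closed e g a
    by (simp add: y_eq derived_graph_def)
  have "grev Y y = aE (g \<otimes> voltage e) (edge_lift (grev B e))"
    using grev_aE voltage aE_mult edge_lift base_grev_closed g lift a e
    by (simp add: y_eq)
  then show "derived_edge (grev Y y) = grev derived (derived_edge y)"
    using derived_edge_translate base_grev_closed e g a
    by (simp add: y_eq derived_graph_def)
qed

lemma derived_vertex_bij: "bij_betw derived_vertex (gverts Y) (gverts derived)"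
proof (rule bij_betw_imageI)
  show "inj_on derived_vertex (gverts Y)"
  proof (rule inj_onI)
    fix v w assume v: "v \<in> gverts Y" and "derived_vertex v = derived_vertex w"
    then have same: "fV v = fV w" "vertex_coset v = vertex_coset w"
      by (simp_all add: derived_vertex_def)
    obtain g where g: "g \<in> carrier G" "aV g (base_lift (fV v)) = v"
      using v by (rule translate_base_lift)
    then have "g \<in> vertex_coset v" by (simp add: vertex_coset_def)
    then have "g \<in> vertex_coset w" using same(2) by simp
    then have "aV g (base_lift (fV w)) = w" by (simp add: vertex_coset_def)
    then show "v = w" using g(2) same(1) by metis
  qed
  show "derived_vertex ` gverts Y = gverts derived"
  proof
    show "derived_vertex ` gverts Y \<subseteq> gverts derived"
      using derived_hom unfolding graph_hom_def by blast
    show "gverts derived \<subseteq> derived_vertex ` gverts Y"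
    proof
      fix p assume "p \<in> gverts derived"
      then obtain g x where p: "p = (g <#\<^bsub>G\<^esub> base_stabilizer x, x)"
        and g: "g \<in> carrier G" and x: "x \<in> gverts B"
        by (auto simp: derived_graph_def)
      then have "p = derived_vertex (aV g (base_lift x))"
        using derived_vertex_translate by simp
      moreover have "aV g (base_lift x) \<in> gverts Y" using aV_closed base_lift g x by blast
      ultimately show "p \<in> derived_vertex ` gverts Y" by blast
    qed
  qed
qed

lemma derived_edge_bij: "bij_betw derived_edge (gedges Y) (gedges derived)"
proof (rule bij_betw_imageI)
  show "inj_on derived_edge (gedges Y)"
  proof (rule inj_onI)
    fix y z assume y: "y \<in> gedges Y" and z: "z \<in> gedges Y"
      and eq: "derived_edge y = derived_edge z"
    obtain g where g: "g \<in> carrier G" "aE g (edge_lift (fE y)) = y"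
      using y by (rule translate_edge_lift)
    obtain h where h: "h \<in> carrier G" "aE h (edge_lift (fE z)) = z"
      using z by (rule translate_edge_lift)
    have "derived_edge y = (g, fE y)"
      using derived_edge_translate[OF fE_closed[OF y] g(1)] g(2) by simp
    moreover have "derived_edge z = (h, fE z)"
      using derived_edge_translate[OF fE_closed[OF z] h(1)] h(2) by simp
    ultimately have "g = h" "fE y = fE z" using eq by simp_all
    then show "y = z" using g(2) h(2) by metis
  qed
  show "derived_edge ` gedges Y = gedges derived"
  proof
    show "derived_edge ` gedges Y \<subseteq> gedges derived"
      using derived_hom unfolding graph_hom_def by blast
    show "gedges derived \<subseteq> derived_edge ` gedges Y"
    proof
      fix p assume "p \<in> gedges derived"
      then obtain g e where p: "p = (g, e)" and g: "g \<in> carrier G" and e: "e \<in> gedges B"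
        by (auto simp: derived_graph_def)
      then have "p = derived_edge (aE g (edge_lift e))"
        using derived_edge_translate by simp
      moreover have "aE g (edge_lift e) \<in> gedges Y" using aE_closed edge_lift g e by blast
      ultimately show "p \<in> derived_edge ` gedges Y" by blast
    qed
  qed
qed

lemma derived_vertex_equivariant:
  assumes h: "h \<in> carrier G" and v: "v \<in> gverts Y"
  shows "derived_vertex (aV h v) = derived_actV G h (derived_vertex v)"
proof -
  obtain g where g: "g \<in> carrier G" and v_eq: "aV g (base_lift (fV v)) = v"
    using v by (rule translate_base_lift)
  have x: "fV v \<in> gverts B" using fV_closed v by blast
  have S: "base_stabilizer (fV v) \<subseteq> carrier G" by (auto simp: stabilizer_def)
  have "aV h v = aV (h \<otimes> g) (base_lift (fV v))"
    using aV_mult h g base_lift x v_eq by simp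
  then have "derived_vertex (aV h v) = ((h \<otimes> g) <#\<^bsub>G\<^esub> base_stabilizer (fV v), fV v)"
    using derived_vertex_translate[OF x m_closed[OF h g]] by simp
  also have "\<dots> = derived_actV G h (g <#\<^bsub>G\<^esub> base_stabilizer (fV v), fV v)"
    by (simp add: derived_actV_def lcos_m_assoc[OF S h g])
  also have "\<dots> = derived_actV G h (derived_vertex v)"
    using derived_vertex_translate[OF x g] v_eq by simp
  finally show ?thesis .
qed

lemma derived_edge_equivariant:
  assumes h: "h \<in> carrier G" and y: "y \<in> gedges Y"
  shows "derived_edge (aE h y) = derived_actE G h (derived_edge y)"
proof -
  obtain g where g: "g \<in> carrier G" and y_eq: "aE g (edge_lift (fE y)) = y"
    using y by (rule translate_edge_lift)
  have e: "fE y \<in> gedges B" using fE_closed y by blast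
  have "aE h y = aE (h \<otimes> g) (edge_lift (fE y))"
    using aE_mult h g edge_lift e y_eq by simp
  then have "derived_edge (aE h y) = (h \<otimes> g, fE y)"
    using derived_edge_translate[OF e m_closed[OF h g]] by simp
  also have "\<dots> = derived_actE G h (derived_edge y)"
    using derived_edge_translate[OF e g] y_eq by (simp add: derived_actE_def)
  finally show ?thesis .
qed

end

theorem proposition2p11:
  fixes G :: "('g, 'm) monoid_scheme"
    and Y :: "('v, 'e) graph" and B :: "('w, 'd) graph"
  assumes "group G" and "finite (carrier G)"
    and "finite_graph Y" and "finite_graph B"
    and "covering G Y B aV aE fV fE"
  shows "\<exists>(\<alpha> :: 'd \<Rightarrow> 'g) (I :: 'w \<Rightarrow> 'g set) \<phi>V \<phi>E.
           (\<forall>e\<in>gedges B. \<alpha> e \<in> carrier G \<and> \<alpha> (grev B e) = inv\<^bsub>G\<^esub> (\<alpha> e)) \<and>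
           (\<forall>v\<in>gverts B. subgroup (I v) G) \<and>
           graph_iso Y (derived_graph G B \<alpha> I) \<phi>V \<phi>E \<and>
           (\<forall>g\<in>carrier G. (\<forall>v\<in>gverts Y. \<phi>V (aV g v) = derived_actV G g (\<phi>V v)) \<and>
                          (\<forall>e\<in>gedges Y. \<phi>E (aE g e) = derived_actE G g (\<phi>E e))) \<and>
           (\<forall>v\<in>gverts Y. snd (\<phi>V v) = fV v) \<and>
           (\<forall>e\<in>gedges Y. snd (\<phi>E e) = fE e)"
proof -
  interpret graph_covering G Y B aV aE fV fE
    using assms by (simp add: graph_covering_def graph_covering_axioms_def finite_graph_def)
  show ?thesis
  proof (intro exI conjI ballI)
    fix e assume "e \<in> gedges B"
    then show "voltage e \<in> carrier G" and "voltage (grev B e) = inv\<^bsub>G\<^esub> (voltage e)"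
      using voltage voltage_grev by auto
  next
    fix x assume "x \<in> gverts B"
    then show "subgroup (base_stabilizer x) G" using subgroup_stabilizer base_lift by blast
  next
    show "graph_iso Y derived derived_vertex derived_edge"
      unfolding graph_iso_def using derived_hom derived_vertex_bij derived_edge_bij by blast
  next
    fix g v assume "g \<in> carrier G" and "v \<in> gverts Y"
    then show "derived_vertex (aV g v) = derived_actV G g (derived_vertex v)"
      by (rule derived_vertex_equivariant)
  next
    fix g y assume "g \<in> carrier G" and "y \<in> gedges Y"
    then show "derived_edge (aE g y) = derived_actE G g (derived_edge y)"
      by (rule derived_edge_equivariant)
  qed (simp_all add: derived_vertex_def derived_edge_def)
qed

end
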